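(* Let $\mathbb{Z}[a,b]$ carry the $\lambda$-ring structure $\Lambda_1\otimes\Lambda_{-1}$, i.e. $a$ is a line element and $b$ satisfies $\lambda^n(b)=b^n$ for all $n$, and let $x=a+b$. Then the $\lambda$-ring homomorphism $\Lambda\to\mathbb{Z}[a,b]$ sending $e_1$ to $x$ has kernel $I_{(2,2)}$ and image $\mathbb{Z}+x\,\mathbb{Z}[a,b]$; thus $\Lambda_{(2,2)}=\Lambda/I_{(2,2)}\cong\mathbb{Z}+x\mathbb{Z}[a,b]$, and in it $\lambda^{n+1}(x)=xb^n$ for all $n\ge0$.
   Context: $\lambda$-rings are special $\lambda$-rings. $\Lambda=\mathbb{Z}[e_1,e_2,\dots]$ is the ring of symmetric functions, the free $\lambda$-ring on $e_1$ with $\lambda^n(e_1)=e_n$, with Schur function basis $s_\pi$. $I_{(2,2)}$ is the subgroup (ideal) of $\Lambda$ spanned by the $s_\pi$ for partitions $\pi$ whose Young diagram contains that of $(2,2)$, i.e. $\pi_1\ge2$ and $\pi_2\ge2$. A line element is an element $\ell$ with $\lambda^n(\ell)=0$ for $n>1$. *)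

theory Defs
  imports "HOL-Library.Poly_Mapping" "HOL-Computational_Algebra.Polynomial"
    "HOL-Combinatorics.Permutations"
begin

text \<open>Polynomial ring over Z in countably many variables; variable n stands for e_(n+1).\<close>
type_synonym symfun = "(nat \<Rightarrow>\<^sub>0 nat) \<Rightarrow>\<^sub>0 int"

definition lvar :: "nat \<Rightarrow> symfun" where
  "lvar n = Poly_Mapping.single (Poly_Mapping.single n 1) 1"

definition elem :: "int \<Rightarrow> symfun" where
  "elem k = (if k < 0 then 0 else if k = 0 then 1 else lvar (nat k - 1))"

definition eval_sym :: "(nat \<Rightarrow> 'a::comm_ring_1) \<Rightarrow> symfun \<Rightarrow> 'a" where
  "eval_sym f p = (\<Sum>m\<in>Poly_Mapping.keys p.
      of_int (Poly_Mapping.lookup p m) * (\<Prod>i\<in>Poly_Mapping.keys m. f i ^ Poly_Mapping.lookup m i))"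

definition is_partition :: "nat list \<Rightarrow> bool" where
  "is_partition p \<longleftrightarrow> sorted_wrt (\<ge>) p \<and> 0 \<notin> set p"

definition conj_part :: "nat list \<Rightarrow> nat list" where
  "conj_part p = map (\<lambda>j. length (filter (\<lambda>x. j < x) p)) [0..<(if p = [] then 0 else hd p)]"

text \<open>Schur function via the dual Jacobi--Trudi identity s_p = det(e_(p'_i - i + j)).\<close>
definition schur :: "nat list \<Rightarrow> symfun" where
  "schur p = (let mu = conj_part p; m = length mu in
     (\<Sum>\<sigma> | \<sigma> permutes {..<m}.
        of_int (sign \<sigma>) * (\<Prod>i<m. elem (int (mu ! i) - int i + int (\<sigma> i)))))"

definition contains22 :: "nat list \<Rightarrow> bool" where
  "contains22 p \<longleftrightarrow> length p \<ge> 2 \<and> p ! 0 \<ge> 2 \<and> p ! 1 \<ge> 2"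

definition I22 :: "symfun set" where
  "I22 = {(\<Sum>p\<in>F. of_int (c p) * schur p) | F c.
            finite F \<and> (\<forall>p\<in>F. is_partition p \<and> contains22 p)}"

text \<open>Z[a,b] as int poly poly: outer variable b, inner variable a.\<close>
type_synonym zab = "int poly poly"

definition va :: zab where "va = [:[:0, 1:]:]"
definition vb :: zab where "vb = [:0, 1:]"

text \<open>Adams operations: the ring endomorphisms with psi^k(a) = a^k (a a line element)
  and psi^k(b) = (-1)^(k+1) b^k (equivalently lambda_t(b) = 1/(1-bt)).\<close>
definition adams :: "nat \<Rightarrow> zab \<Rightarrow> zab" where
  "adams k p = pcompose (map_poly (\<lambda>q. pcompose q (monom 1 k)) p) (monom [:(-1) ^ (k + 1):] k)"

text \<open>Lambda operations on the torsion-free ring Z[a,b], determined by the Adams operations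
  through the Newton identities n lambda^n = sum_(i=1..n) (-1)^(i-1) psi^i lambda^(n-i).\<close>
function lam :: "nat \<Rightarrow> zab \<Rightarrow> zab" where
  "lam 0 x = 1"
| "lam (Suc n) x = (\<Sum>i\<in>{1..Suc n}. (-1) ^ (i + 1) * adams i x * lam (Suc n - i) x)
                     div of_nat (Suc n)"
  by pat_completeness auto
termination by (relation "measure fst") auto

definition xab :: zab where "xab = va + vb"

text \<open>The lambda-ring homomorphism Lambda \<rightarrow> Z[a,b] with e_1 \<mapsto> x: since Lambda is the free
  lambda-ring on e_1 with lambda^n(e_1) = e_n, it is the ring homomorphism e_n \<mapsto> lambda^n(x).\<close>
definition phi :: "symfun \<Rightarrow> zab" where
  "phi = eval_sym (\<lambda>n. lam (Suc n) xab)"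

end

theory Submission
  imports Defs
begin

(* Since Lambda is the free lambda-ring on e_1, phi is the ring map e_n |-> lambda^n(x), and the
   Newton identities with psi^i(x) = a^i + (-1)^(i+1) b^i give lambda^(n+1)(x) = x b^n.

   By the dual Jacobi-Trudi identity s_pi = det(e_(pi'_i - i + j)), phi(s_pi) is a determinant whose
   first two rows (x b^(pi'_1 + j - 1))_j and (x b^(pi'_2 + j - 2))_j are proportional as soon as pi
   contains (2,2); hence I_(2,2) is contained in the kernel.  Conversely Lambda = I_(2,2) + the span
   of 1 and the e_1^j e_(k+1): for a partition mu with mu_2 >= 2 the Jacobi-Trudi expansion of
   s_(mu') in I_(2,2) expresses e_mu through products e_nu of the same weight and strictly larger
   sum of squares, which supports an induction.  The substitution a |-> a - b turns the images
   phi(e_1^j e_(k+1)) = x^(j+1) b^k into distinct monomials a^(j+1) b^k, so they are independent and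
   the kernel is exactly I_(2,2).  Finally the image is generated as a ring by 1 and the x b^k,
   which together with a = x - b gives Z + x Z[a,b]. *)

abbreviation int_scale :: "int \<Rightarrow> 'a::comm_ring_1 \<Rightarrow> 'a" where
  "int_scale c x \<equiv> of_int c * x"

interpretation zmod: module "int_scale :: int \<Rightarrow> 'a::comm_ring_1 \<Rightarrow> 'a"
  by unfold_locales (simp_all add: algebra_simps)

locale ring_hom = additive f for f :: "'a::comm_ring_1 \<Rightarrow> 'b::comm_ring_1" +
  assumes one: "f 1 = 1"
    and mult: "f (x * y) = f x * f y"
begin

lemma power: "f (x ^ n) = f x ^ n"
  by (induction n) (simp_all add: one mult)

lemma prod: "f (prod g A) = (\<Prod>a\<in>A. f (g a))"
  by (induction A rule: infinite_finite_induct) (simp_all add: one mult)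

lemma of_int: "f (of_int z) = of_int z"
proof -
  have "f (of_int (int n)) = of_int (int n)" for n
    by (induction n) (simp_all add: zero one add)
  then show ?thesis
    by (cases z rule: int_cases) (simp_all only: of_int_minus minus)
qed

sublocale zhom: module_hom int_scale int_scale f
proof
  show "f (of_int c * x) = of_int c * f x" for c x
    by (simp add: mult of_int)
qed (simp_all add: add algebra_simps)

lemma range_mult: "y \<in> range f \<Longrightarrow> z \<in> range f \<Longrightarrow> y * z \<in> range f"
  by (auto simp flip: mult)

lemma subspace_range: "zmod.subspace (range f)"
  using zhom.subspace_image[OF zmod.subspace_UNIV] .

end

lemma ring_hom_of_int: "ring_hom of_int"
  by unfold_locales simp_all

lemma ring_hom_comp: "ring_hom f \<Longrightarrow> ring_hom g \<Longrightarrow> ring_hom (g \<circ> f)"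
  by (simp add: ring_hom_def ring_hom_axioms_def additive_def)

lemma ring_hom_poly_map_poly:
  assumes "ring_hom f"
  shows "ring_hom (\<lambda>p. poly (map_poly f p) y)"
proof -
  interpret f: ring_hom f by fact
  have "map_poly f (p + q) = map_poly f p + map_poly f q" for p q
    by (rule poly_eqI) (simp add: coeff_map_poly f.add)
  moreover have "map_poly f (p * q) = map_poly f p * map_poly f q" for p q
    by (rule poly_eqI) (simp add: coeff_map_poly coeff_mult f.sum f.mult)
  ultimately show ?thesis
    by unfold_locales (simp_all add: f.one)
qed

definition eval_monomial :: "(nat \<Rightarrow> 'a::comm_ring_1) \<Rightarrow> (nat \<Rightarrow>\<^sub>0 nat) \<Rightarrow> 'a" where
  "eval_monomial f m = (\<Prod>i\<in>Poly_Mapping.keys m. f i ^ Poly_Mapping.lookup m i)"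

lemma eval_monomial_superset:
  assumes "finite S" "Poly_Mapping.keys m \<subseteq> S"
  shows "eval_monomial f m = (\<Prod>i\<in>S. f i ^ Poly_Mapping.lookup m i)"
  unfolding eval_monomial_def
  by (rule prod.mono_neutral_left) (use assms in \<open>auto simp: in_keys_iff\<close>)

lemma eval_monomial_add: "eval_monomial f (m + m') = eval_monomial f m * eval_monomial f m'"
proof -
  let ?S = "Poly_Mapping.keys m \<union> Poly_Mapping.keys m'"
  have "eval_monomial f (m + m') = (\<Prod>i\<in>?S. f i ^ Poly_Mapping.lookup (m + m') i)"
    by (rule eval_monomial_superset) (auto dest: subsetD[OF keys_add])
  also have "\<dots> = (\<Prod>i\<in>?S. f i ^ Poly_Mapping.lookup m i) * (\<Prod>i\<in>?S. f i ^ Poly_Mapping.lookup m' i)"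
    by (simp add: lookup_add power_add prod.distrib)
  finally show ?thesis
    using eval_monomial_superset[of ?S m f] eval_monomial_superset[of ?S m' f] by simp
qed

lemma eval_sym_superset:
  assumes "finite S" "Poly_Mapping.keys p \<subseteq> S"
  shows "eval_sym f p = (\<Sum>m\<in>S. of_int (Poly_Mapping.lookup p m) * eval_monomial f m)"
  unfolding eval_sym_def eval_monomial_def[symmetric]
  by (rule sum.mono_neutral_left) (use assms in \<open>auto simp: in_keys_iff\<close>)

lemma eval_sym_single: "eval_sym f (Poly_Mapping.single m c) = of_int c * eval_monomial f m"
  by (simp add: eval_sym_def eval_monomial_def)

lemma additive_eval_sym: "additive (eval_sym f)"
proof
  fix p q :: symfun
  let ?S = "Poly_Mapping.keys p \<union> Poly_Mapping.keys q"
  have "eval_sym f (p + q) = (\<Sum>m\<in>?S. of_int (Poly_Mapping.lookup (p + q) m) * eval_monomial f m)"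
    by (rule eval_sym_superset) (auto dest: subsetD[OF keys_add])
  also have "\<dots> = (\<Sum>m\<in>?S. of_int (Poly_Mapping.lookup p m) * eval_monomial f m)
      + (\<Sum>m\<in>?S. of_int (Poly_Mapping.lookup q m) * eval_monomial f m)"
    by (simp add: lookup_add distrib_right sum.distrib)
  finally show "eval_sym f (p + q) = eval_sym f p + eval_sym f q"
    using eval_sym_superset[of ?S p f] eval_sym_superset[of ?S q f] by simp
qed

lemma ring_hom_eval_sym: "ring_hom (eval_sym f)"
proof -
  interpret additive "eval_sym f" by (rule additive_eval_sym)
  have monomial: "eval_sym f (frag_of m * q) = eval_sym f (frag_of m) * eval_sym f q" for m q
    by (induction q rule: frag_induction[OF subset_UNIV])
      (simp_all add: mult_single eval_sym_single eval_monomial_add diff right_diff_distrib zero)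
  have "eval_sym f (p * q) = eval_sym f p * eval_sym f q" for p q
    by (induction p rule: frag_induction[OF subset_UNIV])
      (simp_all add: monomial diff left_diff_distrib zero)
  then show ?thesis
    using eval_sym_single[of f 0 1] by unfold_locales (simp_all add: add eval_monomial_def)
qed

lemma eval_sym_lvar: "eval_sym f (lvar n) = f n"
  by (simp add: lvar_def eval_sym_single eval_monomial_def)

interpretation phi: ring_hom phi
  unfolding phi_def by (rule ring_hom_eval_sym)

section \<open>The \<open>\<lambda>\<close>-operations on \<open>x = a + b\<close>\<close>

lemma va_power: "va ^ i = [:monom 1 i:]"
  by (induction i) (simp_all add: va_def monom_altdef one_pCons)

lemma vb_power: "vb ^ j = monom 1 j"
  by (simp add: vb_def monom_altdef)

lemma adams_xab: "adams k xab = va ^ k + (-1) ^ (k + 1) * vb ^ k"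
proof -
  have "(-1) ^ (k + 1) * vb ^ k = monom [:(-1) ^ (k + 1):] k"
  proof -
    have "(-1 :: zab) = [:[:-1:]:]"
      by (simp add: one_pCons)
    then show ?thesis
      by (simp add: vb_def monom_altdef poly_const_pow)
  qed
  with va_power[of k] show ?thesis
    by (simp add: adams_def xab_def va_def vb_def map_poly_pCons pcompose_pCons pcompose_1)
qed

text \<open>The closed form of \<open>\<lambda>\<^sup>k(a + b)\<close> for a line element \<open>a\<close> and \<open>\<lambda>\<^sup>n(b) = b\<^sup>n\<close>.\<close>

definition lambda_ab :: "'a::comm_ring_1 \<Rightarrow> 'a \<Rightarrow> nat \<Rightarrow> 'a" where
  "lambda_ab a b k = (if k = 0 then 1 else (a + b) * b ^ (k - 1))"

lemma sum_atLeast1_atMost_Suc_Suc: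
  fixes f :: "nat \<Rightarrow> 'b::comm_monoid_add"
  shows "(\<Sum>i = 1..Suc (Suc n). f i) = f 1 + (\<Sum>i = 1..Suc n. f (Suc i))"
proof -
  have "(\<Sum>i = 1..Suc (Suc n). f i) = f 1 + (\<Sum>i = Suc 1..Suc (Suc n). f i)"
    by (rule sum.atLeast_Suc_atMost) simp
  then show ?thesis
    by (simp only: sum.shift_bounds_cl_Suc_ivl)
qed

lemma newton_sum_line:
  "(\<Sum>i = 1..Suc n. (-1) ^ (i + 1) * a ^ i * lambda_ab a b (Suc n - i)) = a * b ^ n"
proof (induction n)
  case 0
  then show ?case by (simp add: lambda_ab_def)
next
  case (Suc n)
  have "(\<Sum>i = 1..Suc (Suc n). (-1) ^ (i + 1) * a ^ i * lambda_ab a b (Suc (Suc n) - i))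
      = a * lambda_ab a b (Suc n)
        + (\<Sum>i = 1..Suc n. (-1) ^ (Suc i + 1) * a ^ Suc i * lambda_ab a b (Suc (Suc n) - Suc i))"
    by (subst sum_atLeast1_atMost_Suc_Suc) simp
  also have "(\<Sum>i = 1..Suc n. (-1) ^ (Suc i + 1) * a ^ Suc i * lambda_ab a b (Suc (Suc n) - Suc i))
      = - a * (\<Sum>i = 1..Suc n. (-1) ^ (i + 1) * a ^ i * lambda_ab a b (Suc n - i))"
    by (simp add: sum_distrib_left algebra_simps)
  finally show ?case
    by (simp only: Suc.IH) (simp add: lambda_ab_def algebra_simps)
qed

lemma newton_sum_dual:
  "(\<Sum>i = 1..Suc n. b ^ i * lambda_ab a b (Suc n - i)) = b ^ Suc n + of_nat n * (a + b) * b ^ n"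
proof (induction n)
  case 0
  then show ?case by (simp add: lambda_ab_def)
next
  case (Suc n)
  have "(\<Sum>i = 1..Suc (Suc n). b ^ i * lambda_ab a b (Suc (Suc n) - i))
      = b * lambda_ab a b (Suc n) + b * (\<Sum>i = 1..Suc n. b ^ i * lambda_ab a b (Suc n - i))"
    by (subst sum_atLeast1_atMost_Suc_Suc) (simp add: sum_distrib_left algebra_simps)
  also have "\<dots> = b ^ Suc (Suc n) + of_nat (Suc n) * (a + b) * b ^ Suc n"
    by (simp only: Suc.IH) (simp add: lambda_ab_def algebra_simps)
  finally show ?case .
qed

lemma newton_identity_lambda_ab:
  "(\<Sum>i = 1..Suc n. (-1) ^ (i + 1) * (a ^ i + (-1) ^ (i + 1) * b ^ i) * lambda_ab a b (Suc n - i))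
    = of_nat (Suc n) * lambda_ab a b (Suc n)"
proof -
  have sign: "(-1) ^ (i + 1) * ((-1) ^ (i + 1) * y) = (y :: 'a)" for i y
    by (simp flip: mult.assoc power_add)
  have "(\<Sum>i = 1..Suc n. (-1) ^ (i + 1) * (a ^ i + (-1) ^ (i + 1) * b ^ i) * lambda_ab a b (Suc n - i))
    = (\<Sum>i = 1..Suc n. (-1) ^ (i + 1) * a ^ i * lambda_ab a b (Suc n - i)
                        + b ^ i * lambda_ab a b (Suc n - i))"
    by (rule sum.cong) (simp_all only: distrib_left distrib_right sign mult.assoc)
  also have "\<dots> = a * b ^ n + (b ^ Suc n + of_nat n * (a + b) * b ^ n)"
    by (simp only: sum.distrib newton_sum_line newton_sum_dual)
  finally show ?thesis
    by (simp add: lambda_ab_def algebra_simps)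
qed

lemma lam_xab: "lam k xab = lambda_ab va vb k"
proof (induction k rule: less_induct)
  case (less k)
  show ?case
  proof (cases k)
    case 0
    then show ?thesis by (simp add: lambda_ab_def)
  next
    case (Suc n)
    have "(\<Sum>i = 1..Suc n. (-1) ^ (i + 1) * adams i xab * lam (Suc n - i) xab)
        = (\<Sum>i = 1..Suc n. (-1) ^ (i + 1) * (va ^ i + (-1) ^ (i + 1) * vb ^ i)
                              * lambda_ab va vb (Suc n - i))"
      using less.IH Suc by (intro sum.cong) (simp_all add: adams_xab)
    also have "\<dots> = of_nat (Suc n) * lambda_ab va vb (Suc n)"
      by (rule newton_identity_lambda_ab)
    finally have "lam (Suc n) xab = of_nat (Suc n) * lambda_ab va vb (Suc n) div of_nat (Suc n)"
      by (simp only: lam.simps)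
    then show ?thesis
      using Suc by (simp del: of_nat_Suc)
  qed
qed

lemma lam_Suc_xab: "lam (Suc n) xab = xab * vb ^ n"
  by (simp only: lam_xab) (simp add: lambda_ab_def xab_def)

lemma phi_lvar: "phi (lvar n) = xab * vb ^ n"
  by (simp add: phi_def eval_sym_lvar lam_Suc_xab del: lam.simps)

lemma phi_elem:
  "phi (elem k) = (if k < 0 then 0 else if k = 0 then 1 else xab * vb ^ (nat k - 1))"
  by (simp add: elem_def phi_lvar phi.one phi.zero)

lemma length_conj_part: "length (conj_part p) = (if p = [] then 0 else hd p)"
  by (simp add: conj_part_def)

lemma nth_conj_part: "j < length (conj_part p) \<Longrightarrow> conj_part p ! j = length (filter (\<lambda>x. j < x) p)"
  by (simp add: conj_part_def split: if_splits)

lemma less_nth_iff_less_length_filter: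
  fixes xs :: "'a::linorder list"
  assumes "sorted_wrt (\<ge>) xs" "i < length xs"
  shows "j < xs ! i \<longleftrightarrow> i < length (filter (\<lambda>x. j < x) xs)"
  using assms
proof (induction xs arbitrary: i)
  case Nil
  then show ?case by simp
next
  case (Cons a xs)
  show ?case
  proof (cases "j < a")
    case True
    then show ?thesis
      using Cons by (cases i) auto
  next
    case False
    have "\<not> j < x" if "x \<in> set (a # xs)" for x
    proof -
      have "x \<le> a"
        using that Cons.prems(1) by auto
      then show ?thesis
        using False by simp
    qed
    then show ?thesis
      using Cons.prems(2) nth_mem[of i "a # xs"] by (auto simp: filter_empty_conv)
  qed
qed

lemma length_filter_mono:
  "(\<And>x. P x \<Longrightarrow> Q x) \<Longrightarrow> length (filter P xs) \<le> length (filter Q xs)"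
  by (induction xs) auto

lemma partition_nth_le_nth:
  "is_partition p \<Longrightarrow> i \<le> k \<Longrightarrow> k < length p \<Longrightarrow> p ! k \<le> p ! i"
  unfolding is_partition_def by (auto simp: sorted_wrt_iff_nth_less le_less)

lemma partition_nth_pos: "is_partition p \<Longrightarrow> k < length p \<Longrightarrow> 0 < p ! k"
  unfolding is_partition_def by (metis gr0I nth_mem)

lemma filter_pos_partition: "is_partition p \<Longrightarrow> filter (\<lambda>x. 0 < x) p = p"
  unfolding is_partition_def by (auto simp: filter_id_conv intro: gr0I)

lemma length_conj_part_partition: "is_partition p \<Longrightarrow> p \<noteq> [] \<Longrightarrow> length (conj_part p) = p ! 0"
  by (simp add: length_conj_part hd_conv_nth)

lemma conj_part_nth_0: "is_partition p \<Longrightarrow> p \<noteq> [] \<Longrightarrow> conj_part p ! 0 = length p"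
  using partition_nth_pos[of p 0]
  by (simp add: nth_conj_part length_conj_part_partition filter_pos_partition)

lemma is_partition_conj_part:
  assumes "is_partition p"
  shows "is_partition (conj_part p)"
  unfolding is_partition_def
proof
  show "sorted_wrt (\<ge>) (conj_part p)"
    by (auto simp: sorted_wrt_iff_nth_less nth_conj_part intro: length_filter_mono)
  show "0 \<notin> set (conj_part p)"
  proof
    assume "0 \<in> set (conj_part p)"
    then obtain j where j: "j < length (conj_part p)" "conj_part p ! j = 0"
      by (auto simp: in_set_conv_nth)
    then have "p \<noteq> []" and "p ! 0 \<in> set (filter (\<lambda>x. j < x) p)"
      using length_conj_part_partition[OF assms] by (auto simp: length_conj_part split: if_splits)
    then show False
      using j by (auto simp: nth_conj_part filter_empty_conv)
  qed
qed

lemma conj_part_conj_part: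
  assumes p: "is_partition p"
  shows "conj_part (conj_part p) = p"
proof (cases "p = []")
  case True
  then show ?thesis by (simp add: conj_part_def)
next
  case False
  let ?q = "conj_part p"
  have lq: "length ?q = p ! 0"
    using p False by (rule length_conj_part_partition)
  have qne: "?q \<noteq> []"
    using lq partition_nth_pos[OF p, of 0] False by auto
  show ?thesis
  proof (rule nth_equalityI)
    show "length (conj_part ?q) = length p"
      using conj_part_nth_0[OF p False] qne by (simp add: length_conj_part hd_conv_nth)
  next
    fix k
    assume "k < length (conj_part ?q)"
    then have k: "k < length p"
      using conj_part_nth_0[OF p False] qne by (simp add: length_conj_part hd_conv_nth)
    have "k < ?q ! j \<longleftrightarrow> j < p ! k" if "j < length ?q" for j
      using that less_nth_iff_less_length_filter[of p k j] p k
      by (simp add: nth_conj_part is_partition_def)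
    then have "{j. j < length ?q \<and> k < ?q ! j} = {..< p ! k}"
      using partition_nth_le_nth[OF p, of 0 k] k lq by auto
    then show "conj_part ?q ! k = p ! k"
      using k conj_part_nth_0[OF p False] qne
      by (simp add: nth_conj_part length_conj_part hd_conv_nth length_filter_conv_card)
  qed
qed

lemma contains22_conj_part:
  assumes p: "is_partition p" and "contains22 p"
  shows "contains22 (conj_part p)"
proof -
  have p1: "2 \<le> p ! 1" "2 \<le> length p"
    using assms(2) by (auto simp: contains22_def)
  have ne: "p \<noteq> []" and p01: "p ! 1 \<le> p ! 0"
    using p1 partition_nth_le_nth[OF p, of 0 1] by auto
  have "1 < length (filter (\<lambda>x. 1 < x) p)"
    using less_nth_iff_less_length_filter[of p 1 1] p p1 by (simp add: is_partition_def)
  then show ?thesis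
    using p1 p01 conj_part_nth_0[OF p ne] length_conj_part_partition[OF p ne]
    by (simp add: contains22_def nth_conj_part)
qed

section \<open>Jacobi--Trudi determinants\<close>

definition jacobi_trudi :: "(int \<Rightarrow> 'a::comm_ring_1) \<Rightarrow> nat list \<Rightarrow> 'a" where
  "jacobi_trudi f mu = (\<Sum>\<sigma> | \<sigma> permutes {..<length mu}.
      of_int (sign \<sigma>) * (\<Prod>i<length mu. f (int (mu ! i) - int i + int (\<sigma> i))))"

lemma schur_eq_jacobi_trudi: "schur p = jacobi_trudi elem (conj_part p)"
  by (simp add: schur_def jacobi_trudi_def Let_def)

lemma (in ring_hom) jacobi_trudi: "f (jacobi_trudi g mu) = jacobi_trudi (f \<circ> g) mu"
  by (simp add: jacobi_trudi_def sum prod mult of_int)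

lemma jacobi_trudi_split_diagonal:
  "jacobi_trudi f mu = (\<Prod>i<length mu. f (int (mu ! i)))
    + (\<Sum>\<sigma> \<in> {\<sigma>. \<sigma> permutes {..<length mu}} - {id}.
         of_int (sign \<sigma>) * (\<Prod>i<length mu. f (int (mu ! i) - int i + int (\<sigma> i))))"
  unfolding jacobi_trudi_def
  by (subst sum.remove[of _ id]) (simp_all add: finite_permutations permutes_id)

text \<open>The hypothesis says that the first two rows are proportional (all their \<open>2 \<times> 2\<close> minors
  vanish); right composition with the transposition of the first two columns is then a
  sign-reversing involution on the terms.\<close>

lemma jacobi_trudi_eq_0_if_rows_proportional:
  fixes f :: "int \<Rightarrow> 'a::{idom, ring_char_0}"
  assumes m: "2 \<le> length mu"
    and rows: "\<And>s t. f (int (mu ! 0) + int s) * f (int (mu ! 1) - 1 + int t)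
                    = f (int (mu ! 0) + int t) * f (int (mu ! 1) - 1 + int s)"
  shows "jacobi_trudi f mu = 0"
proof -
  let ?m = "length mu"
  let ?P = "{\<sigma>. \<sigma> permutes {..<?m}}"
  let ?t = "Transposition.transpose (0::nat) 1"
  define F where "F \<sigma> = of_int (sign \<sigma>) * (\<Prod>i<?m. f (int (mu ! i) - int i + int (\<sigma> i)))" for \<sigma>
  have split: "(\<Prod>i<?m. h i) = h 0 * h 1 * (\<Prod>i\<in>{2..<?m}. h i)" for h :: "nat \<Rightarrow> 'a"
  proof -
    have "{..<?m} = insert 0 (insert 1 {2..<?m})"
      using m by auto
    then show ?thesis by (simp add: mult.assoc)
  qed
  have swap: "F (\<sigma> \<circ> ?t) = - F \<sigma>" if \<sigma>: "\<sigma> permutes {..<?m}" for \<sigma>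
  proof -
    have "sign (\<sigma> \<circ> ?t) = - sign \<sigma>"
      using permutes_imp_permutation[OF _ \<sigma>]
      by (simp add: sign_compose permutation_swap_id sign_swap_id)
    moreover have "(\<Prod>i\<in>{2..<?m}. f (int (mu ! i) - int i + int ((\<sigma> \<circ> ?t) i)))
        = (\<Prod>i\<in>{2..<?m}. f (int (mu ! i) - int i + int (\<sigma> i)))"
      by (rule prod.cong) auto
    ultimately show ?thesis
      unfolding F_def split[of "\<lambda>i. f (int (mu ! i) - int i + int ((\<sigma> \<circ> ?t) i))"]
        split[of "\<lambda>i. f (int (mu ! i) - int i + int (\<sigma> i))"]
      using rows[of "\<sigma> 1" "\<sigma> 0"] by (simp add: algebra_simps)
  qed
  have "sum F ?P = (\<Sum>\<sigma>\<in>?P. F (\<sigma> \<circ> ?t))"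
    using m by (intro sum_permutations_compose_right permutes_swap_id) auto
  also have "\<dots> = (\<Sum>\<sigma>\<in>?P. - F \<sigma>)"
    using swap by (intro sum.cong) simp_all
  also have "\<dots> = - sum F ?P"
    by (rule sum_negf)
  finally show ?thesis
    by (simp add: jacobi_trudi_def F_def eq_neg_iff_add_eq_0 flip: mult_2)
qed

lemma phi_schur_eq_0:
  assumes "is_partition p" "contains22 p"
  shows "phi (schur p) = 0"
proof -
  let ?mu = "conj_part p"
  have m: "2 \<le> length ?mu"
    using contains22_conj_part[OF assms] by (simp add: contains22_def)
  obtain r0 r1 where r: "?mu ! 0 = Suc (Suc r0)" "?mu ! 1 = Suc (Suc r1)"
    using contains22_conj_part[OF assms] by (auto simp: contains22_def dest!: le_Suc_ex)
  have "phi (elem (int (?mu ! 0) + int s)) = xab * vb ^ (Suc r0 + s)"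
    and "phi (elem (int (?mu ! 1) - 1 + int s)) = xab * vb ^ (r1 + s)" for s
    using r by (simp_all add: phi_elem nat_add_distrib)
  then have "jacobi_trudi (phi \<circ> elem) ?mu = 0"
    using m by (intro jacobi_trudi_eq_0_if_rows_proportional) (simp_all add: algebra_simps flip: power_add)
  then show ?thesis
    by (simp add: schur_eq_jacobi_trudi phi.jacobi_trudi)
qed

lemma sum_lessThan_card_le_sum:
  fixes S :: "nat set"
  assumes "finite S"
  shows "(\<Sum>i<card S. i) \<le> (\<Sum>i\<in>S. i)"
  using assms
proof (induction "card S" arbitrary: S)
  case 0
  then show ?case by simp
next
  case (Suc n S)
  define M where "M = Max S"
  have "S \<noteq> {}"
    using Suc.hyps(2) by auto
  then have M: "M \<in> S" "S \<subseteq> {..M}"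
    using Suc.prems by (auto simp: M_def)
  then have "n \<le> M"
    using Suc.hyps(2) card_mono[of "{..M}" S] by simp
  moreover have "card (S - {M}) = n"
    using Suc.hyps(2) Suc.prems M by simp
  then have "(\<Sum>i<n. i) \<le> (\<Sum>i\<in>S - {M}. i)"
    using Suc.hyps(1)[of "S - {M}"] Suc.prems by simp
  ultimately show ?case
    using Suc.prems Suc.hyps(2) M by (simp add: sum.remove[of S M] flip: Suc.hyps(2))
qed

lemma sum_lessThan_le_sum_inj:
  fixes f :: "nat \<Rightarrow> nat"
  assumes "inj_on f {..<k}"
  shows "(\<Sum>i<k. i) \<le> (\<Sum>i<k. f i)"
  using sum_lessThan_card_le_sum[of "f ` {..<k}"] assms
  by (simp add: card_image sum.reindex)

lemma abel_summation_le:
  fixes g d :: "nat \<Rightarrow> int"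
  assumes "\<And>i j. i \<le> j \<Longrightarrow> g j \<le> g i"
    and "\<And>k. k \<le> m \<Longrightarrow> 0 \<le> (\<Sum>i<k. d i)"
    and "k \<le> m"
  shows "g k * (\<Sum>i<k. d i) \<le> (\<Sum>i<k. g i * d i)"
  using assms(3)
proof (induction k)
  case 0
  then show ?case by simp
next
  case (Suc k)
  have "g (Suc k) * (\<Sum>i<Suc k. d i) \<le> g k * (\<Sum>i<Suc k. d i)"
    using assms(1)[of k "Suc k"] assms(2)[OF Suc.prems] by (intro mult_right_mono) auto
  also have "\<dots> \<le> (\<Sum>i<Suc k. g i * d i)"
    using Suc by (simp add: algebra_simps)
  finally show ?case .
qed

text \<open>With \<open>d\<^sub>i = \<sigma>(i) - i\<close> the cross term \<open>\<Sum> \<mu>\<^sub>i d\<^sub>i\<close> is nonnegative by Abel summation, since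
  \<open>\<mu>\<close> is decreasing and the partial sums of \<open>d\<close> are nonnegative; the square term is positive.\<close>

lemma sum_squares_less_permuted_shift:
  fixes mu :: "nat list"
  assumes sorted: "sorted_wrt (\<ge>) mu" and \<sigma>: "\<sigma> permutes {..<length mu}" and "\<sigma> \<noteq> id"
  shows "(\<Sum>i<length mu. (int (mu ! i))\<^sup>2) < (\<Sum>i<length mu. (int (mu ! i) - int i + int (\<sigma> i))\<^sup>2)"
proof -
  let ?m = "length mu"
  define d where "d i = int (\<sigma> i) - int i" for i
  define g where "g i = (if i < ?m then int (mu ! i) else 0)" for i
  have prefix: "0 \<le> (\<Sum>i<k. d i)" if "k \<le> ?m" for k
  proof -
    have "inj_on \<sigma> {..<k}"
      using permutes_inj[OF \<sigma>] by (rule inj_on_subset) simp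
    then show ?thesis
      using sum_lessThan_le_sum_inj[of \<sigma> k] by (simp add: d_def sum_subtractf flip: of_nat_sum)
  qed
  have "g ?m * (\<Sum>i<?m. d i) \<le> (\<Sum>i<?m. g i * d i)"
    using sorted by (intro abel_summation_le prefix)
      (auto simp: g_def sorted_wrt_iff_nth_less le_less)
  then have cross: "0 \<le> (\<Sum>i<?m. int (mu ! i) * d i)"
    by (simp add: g_def)
  obtain j where j: "j < ?m" "\<sigma> j \<noteq> j"
    using \<open>\<sigma> \<noteq> id\<close> permutes_not_in[OF \<sigma>] by (metis eq_id_iff lessThan_iff)
  have "0 < (d j)\<^sup>2"
    using j by (simp add: d_def)
  also have "\<dots> \<le> (\<Sum>i<?m. (d i)\<^sup>2)"
    using j by (intro member_le_sum) auto
  finally have "0 < (\<Sum>i<?m. (d i)\<^sup>2)" .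
  moreover have "(\<Sum>i<?m. (int (mu ! i) - int i + int (\<sigma> i))\<^sup>2) = (\<Sum>i<?m. (int (mu ! i) + d i)\<^sup>2)"
    by (simp add: d_def algebra_simps)
  moreover have "\<dots> = (\<Sum>i<?m. (int (mu ! i))\<^sup>2) + 2 * (\<Sum>i<?m. int (mu ! i) * d i) + (\<Sum>i<?m. (d i)\<^sup>2)"
    by (simp add: power2_sum sum.distrib sum_distrib_left algebra_simps)
  ultimately show ?thesis
    using cross by linarith
qed

section \<open>Spanning \<open>\<Lambda>\<close> modulo \<open>I\<^sub>(\<^sub>2\<^sub>,\<^sub>2\<^sub>)\<close>\<close>

definition schurs22 :: "symfun set" where
  "schurs22 = schur ` {p. is_partition p \<and> contains22 p}"

lemma I22_eq_span: "I22 = zmod.span schurs22"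
proof
  show "I22 \<subseteq> zmod.span schurs22"
  proof
    fix y
    assume "y \<in> I22"
    then obtain F c where "\<forall>p\<in>F. is_partition p \<and> contains22 p" "y = (\<Sum>p\<in>F. of_int (c p) * schur p)"
      unfolding I22_def by blast
    then show "y \<in> zmod.span schurs22"
      unfolding schurs22_def by (auto intro!: zmod.span_sum zmod.span_scale intro: zmod.span_base)
  qed
next
  show "zmod.span schurs22 \<subseteq> I22"
  proof
    fix y
    assume "y \<in> zmod.span schurs22"
    then obtain t r where t: "finite t" "t \<subseteq> schurs22" "y = (\<Sum>a\<in>t. of_int (r a) * a)"
      unfolding zmod.span_explicit by blast
    then obtain F where F: "F \<subseteq> {p. is_partition p \<and> contains22 p}" "inj_on schur F" "t = schur ` F"
      unfolding schurs22_def by (auto simp: subset_image_inj)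
    then have "y = (\<Sum>p\<in>F. of_int (r (schur p)) * schur p)" and "finite F"
      using t by (simp_all add: sum.reindex finite_image_iff)
    then show "y \<in> I22"
      using F(1) unfolding I22_def by (intro CollectI exI[of _ F] exI[of _ "r \<circ> schur"]) auto
  qed
qed

definition elem_prod :: "nat list \<Rightarrow> symfun" where
  "elem_prod xs = (\<Prod>k\<leftarrow>xs. elem (int k))"

definition sum_sq :: "nat list \<Rightarrow> nat" where
  "sum_sq xs = (\<Sum>k\<leftarrow>xs. k\<^sup>2)"

text \<open>The products \<open>e\<^sub>1\<^sup>j e\<^sub>k\<^sub>+\<^sub>1\<close>, a basis of \<open>\<Lambda>\<close> modulo \<open>I\<^sub>(\<^sub>2\<^sub>,\<^sub>2\<^sub>)\<close> (in place of the
  Schur functions of hooks).\<close>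

definition hook_monomials :: "symfun set" where
  "hook_monomials = insert 1 {lvar 0 ^ j * lvar k | j k. True}"

lemma elem_prod_append: "elem_prod (xs @ ys) = elem_prod xs * elem_prod ys"
  by (simp add: elem_prod_def)

lemma elem_prod_replicate: "elem_prod (replicate n (Suc k)) = lvar k ^ n"
  by (simp add: elem_prod_def elem_def del: of_nat_Suc)

lemma elem_prod_conv_prod: "elem_prod xs = (\<Prod>i<length xs. elem (int (xs ! i)))"
  by (simp add: elem_prod_def prod.list_conv_set_nth atLeast0LessThan)

lemma sum_sq_conv_sum: "sum_sq xs = (\<Sum>i<length xs. (xs ! i)\<^sup>2)"
  by (simp add: sum_sq_def sum_list_sum_nth atLeast0LessThan)

lemma sum_sq_le_square_sum: "sum_sq xs \<le> (sum_list xs)\<^sup>2"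
proof (induction xs)
  case Nil
  then show ?case by (simp add: sum_sq_def)
next
  case (Cons a xs)
  then show ?case
    by (simp add: sum_sq_def power2_sum)
qed

lemma partition_of_list:
  obtains mu where "is_partition mu" "elem_prod mu = elem_prod xs"
    "sum_list mu = sum_list xs" "sum_sq mu = sum_sq xs"
proof
  let ?ys = "rev (sort xs)"
  let ?mu = "filter (\<lambda>k. 0 < k) ?ys"
  have "elem_prod (filter (\<lambda>k. 0 < k) ys) = elem_prod ys"
    and "sum_sq (filter (\<lambda>k. 0 < k) ys) = sum_sq ys"
    and "sum_list (filter (\<lambda>k. 0 < k) ys) = sum_list ys" for ys
    by (induction ys) (simp_all add: elem_prod_def sum_sq_def elem_def)
  moreover have "elem_prod ?ys = elem_prod xs" "sum_sq ?ys = sum_sq xs" "sum_list ?ys = sum_list xs"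
    unfolding elem_prod_def sum_sq_def
    by (simp_all add: mset_map flip: prod_mset_prod_list sum_mset_sum_list)
  ultimately show "elem_prod ?mu = elem_prod xs" "sum_list ?mu = sum_list xs" "sum_sq ?mu = sum_sq xs"
    by simp_all
  show "is_partition ?mu"
    by (simp add: is_partition_def sorted_wrt_rev sorted_wrt_filter)
qed

lemma hook_shape:
  assumes mu: "is_partition mu" and "mu \<noteq> []" and "\<not> (2 \<le> length mu \<and> 2 \<le> mu ! 1)"
  shows "mu = mu ! 0 # replicate (length mu - 1) 1"
proof (rule nth_equalityI)
  fix i
  assume i: "i < length mu"
  have "mu ! i = 1" if "i = Suc j" for j
  proof -
    have "mu ! i \<le> mu ! 1"
      using i that by (intro partition_nth_le_nth[OF mu]) simp_all
    moreover have "mu ! 1 \<le> 1"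
      using assms(3) i that by simp
    ultimately show ?thesis
      using partition_nth_pos[OF mu i] by simp
  qed
  then show "mu ! i = (mu ! 0 # replicate (length mu - 1) 1) ! i"
    using i by (cases i) auto
qed (use assms in simp)

lemma elem_prod_hook:
  assumes mu: "is_partition mu" and "\<not> (2 \<le> length mu \<and> 2 \<le> mu ! 1)"
  shows "elem_prod mu \<in> hook_monomials"
proof (cases "mu = []")
  case True
  then show ?thesis by (simp add: hook_monomials_def elem_prod_def)
next
  case False
  obtain k where k: "mu ! 0 = Suc k"
    using partition_nth_pos[OF mu, of 0] False by (auto dest: gr0_implies_Suc)
  have "elem_prod mu = elem_prod [Suc k] * elem_prod (replicate (length mu - 1) (Suc 0))"
    by (subst hook_shape[OF assms(1) False assms(2)]) (simp add: k flip: elem_prod_append)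
  also have "\<dots> = lvar 0 ^ (length mu - 1) * lvar k"
    by (simp add: elem_prod_replicate elem_prod_def elem_def del: of_nat_Suc)
  finally show ?thesis
    by (auto simp: hook_monomials_def)
qed

lemma jacobi_trudi_term_elem_prod:
  assumes mu: "is_partition mu" and \<sigma>: "\<sigma> permutes {..<length mu}" and "\<sigma> \<noteq> id"
  defines "T \<equiv> (\<Prod>i<length mu. elem (int (mu ! i) - int i + int (\<sigma> i)))"
  shows "T = 0 \<or> (\<exists>nu. T = elem_prod nu \<and> sum_list nu = sum_list mu \<and> sum_sq mu < sum_sq nu)"
proof (cases "\<exists>i<length mu. int (mu ! i) - int i + int (\<sigma> i) < 0")
  case True
  then obtain i where "i < length mu" "int (mu ! i) - int i + int (\<sigma> i) < 0"
    by blast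
  then have "T = 0"
    unfolding T_def by (intro prod_zero) (auto simp: elem_def intro!: bexI[of _ i])
  then show ?thesis ..
next
  case False
  let ?m = "length mu"
  let ?a = "\<lambda>i. int (mu ! i) - int i + int (\<sigma> i)"
  define nu where "nu = map (\<lambda>i. nat (?a i)) [0..<?m]"
  have a: "int (nu ! i) = ?a i" if "i < ?m" for i
  proof -
    have "0 \<le> ?a i"
      using False that not_less by blast
    then show ?thesis
      using that by (simp add: nu_def)
  qed
  have len: "length nu = ?m"
    by (simp add: nu_def)
  then have "T = elem_prod nu"
    unfolding T_def elem_prod_conv_prod using a by (intro prod.cong) auto
  moreover have "sum_list nu = sum_list mu"
  proof -
    have "int (sum_list nu) = (\<Sum>i<?m. ?a i)"
      using len a by (simp add: sum_list_sum_nth atLeast0LessThan of_nat_sum)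
    also have "\<dots> = int (sum_list mu)"
      using sum.permute[OF \<sigma>, of "\<lambda>i. i"]
      by (simp add: sum_list_sum_nth atLeast0LessThan sum.distrib sum_subtractf flip: of_nat_sum)
    finally show ?thesis
      by simp
  qed
  moreover have "sum_sq mu < sum_sq nu"
  proof -
    have "int (sum_sq mu) < (\<Sum>i<?m. (?a i)\<^sup>2)"
      using sum_squares_less_permuted_shift[OF _ \<sigma> \<open>\<sigma> \<noteq> id\<close>] mu
      by (simp add: sum_sq_conv_sum is_partition_def of_nat_sum)
    also have "\<dots> = int (sum_sq nu)"
      using len a by (simp add: sum_sq_conv_sum of_nat_sum)
    finally show ?thesis
      by simp
  qed
  ultimately show ?thesis
    by blast
qed

text \<open>The measure uses truncated subtraction, which is harmless since
  \<open>sum_sq xs \<le> (sum_list xs)\<^sup>2\<close>.\<close>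

lemma elem_prod_mem_span: "elem_prod xs \<in> zmod.span (schurs22 \<union> hook_monomials)"
proof (induction "(sum_list xs)\<^sup>2 - sum_sq xs" arbitrary: xs rule: less_induct)
  case less
  obtain mu where mu: "is_partition mu" "elem_prod mu = elem_prod xs"
    "sum_list mu = sum_list xs" "sum_sq mu = sum_sq xs"
    by (rule partition_of_list)
  let ?V = "zmod.span (schurs22 \<union> hook_monomials)"
  show ?case
  proof (cases "2 \<le> length mu \<and> 2 \<le> mu ! 1")
    case False
    then show ?thesis
      using elem_prod_hook[OF mu(1)] mu(2) by (auto intro: zmod.span_base)
  next
    case True
    let ?T = "\<lambda>\<sigma>. \<Prod>i<length mu. elem (int (mu ! i) - int i + int (\<sigma> i))"
    have "contains22 mu"
      using True partition_nth_le_nth[OF mu(1), of 0 1] by (simp add: contains22_def)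
    then have "schur (conj_part mu) \<in> schurs22"
      using is_partition_conj_part[OF mu(1)] contains22_conj_part[OF mu(1)]
      unfolding schurs22_def by blast
    then have "jacobi_trudi elem mu \<in> ?V"
      by (simp add: schur_eq_jacobi_trudi conj_part_conj_part[OF mu(1)] zmod.span_base)
    moreover have "?T \<sigma> \<in> ?V" if "\<sigma> permutes {..<length mu}" "\<sigma> \<noteq> id" for \<sigma>
    proof -
      have "elem_prod nu \<in> ?V" if "sum_list nu = sum_list mu" "sum_sq mu < sum_sq nu" for nu
        using less that mu sum_sq_le_square_sum[of nu] by simp
      with jacobi_trudi_term_elem_prod[OF mu(1) that] show ?thesis
        by (elim disjE exE conjE) (simp only: zmod.span_zero, simp)
    qed
    ultimately have "jacobi_trudi elem mu
        - (\<Sum>\<sigma> \<in> {\<sigma>. \<sigma> permutes {..<length mu}} - {id}. of_int (sign \<sigma>) * ?T \<sigma>) \<in> ?V"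
      by (auto intro!: zmod.span_diff zmod.span_sum zmod.span_scale)
    then have "elem_prod mu \<in> ?V"
      by (simp add: jacobi_trudi_split_diagonal elem_prod_conv_prod)
    then show ?thesis
      by (simp only: mu(2))
  qed
qed

lemma single_single_eq_lvar_power: "Poly_Mapping.single (Poly_Mapping.single k n) (1::int) = lvar k ^ n"
proof (induction n)
  case (Suc n)
  have "Poly_Mapping.single k (Suc n) = Poly_Mapping.single k 1 + Poly_Mapping.single k n"
    by (simp flip: single_add)
  then have "Poly_Mapping.single (Poly_Mapping.single k (Suc n)) (1::int)
      = lvar k * Poly_Mapping.single (Poly_Mapping.single k n) 1"
    by (simp add: mult_single lvar_def)
  then show ?case
    using Suc by simp
qed simp

lemma monomial_eq_elem_prod: "\<exists>xs. Poly_Mapping.single m (1::int) = elem_prod xs"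
proof (induction m rule: update_induct)
  case const
  then show ?case
    by (auto simp: elem_prod_def intro: exI[of _ "[]"])
next
  case (update m k n)
  then obtain xs where xs: "Poly_Mapping.single m (1::int) = elem_prod xs"
    by blast
  have "Poly_Mapping.update k n m = m + Poly_Mapping.single k n"
    using update.hyps(1)
    by (intro poly_mapping_eqI) (auto simp: lookup_update lookup_add lookup_single in_keys_iff when_def)
  then have "Poly_Mapping.single (Poly_Mapping.update k n m) (1::int)
      = Poly_Mapping.single m 1 * lvar k ^ n"
    by (simp add: mult_single flip: single_single_eq_lvar_power)
  then show ?case
    by (metis xs elem_prod_append elem_prod_replicate)
qed

lemma symfun_mem_span: "p \<in> zmod.span (schurs22 \<union> hook_monomials)"
proof (induction p rule: frag_induction[OF subset_UNIV])
  case (2 m)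
  then show ?case
    using monomial_eq_elem_prod[of m] elem_prod_mem_span by auto
qed (simp_all add: zmod.span_zero zmod.span_diff)

section \<open>Independence of the images of the hook monomials\<close>

lemma monom_monom_eq: "monom (monom c i) j = of_int c * va ^ i * vb ^ j"
  by (simp add: va_power vb_power of_int_poly smult_monom mult_monom)

lemma zmod_independent_monomials: "zmod.independent (range (\<lambda>(i, j). monom (monom (1::int) i) j))"
  unfolding zmod.independent_explicit_module
proof (intro allI impI)
  fix t r v
  assume t: "finite t" "t \<subseteq> range (\<lambda>(i, j). monom (monom (1::int) i) j)"
    and sum: "(\<Sum>w\<in>t. of_int (r w) * w) = 0" and v: "v \<in> t"
  obtain i j where ij: "v = monom (monom 1 i) j"
    using v t(2) by auto
  have "r w * coeff (coeff w j) i = (if w = v then r w else 0)" if w: "w \<in> t" for w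
  proof -
    obtain i' j' where "w = monom (monom 1 i') j'"
      using w t(2) by auto
    then show ?thesis
      by (auto simp: ij coeff_monom monom_eq_iff')
  qed
  then have "coeff (coeff (\<Sum>w\<in>t. of_int (r w) * w) j) i = (\<Sum>w\<in>t. if w = v then r w else 0)"
    by (simp add: coeff_sum of_int_poly)
  also have "\<dots> = r v"
    using t(1) v by simp
  finally show "r v = 0"
    using sum by simp
qed

text \<open>The substitution \<open>a \<mapsto> a - b\<close>, \<open>b \<mapsto> b\<close>; it sends \<open>x\<close> to \<open>a\<close>, so that the images of
  \<open>\<phi>(e\<^sub>1\<^sup>j e\<^sub>k\<^sub>+\<^sub>1) = x\<^sup>j\<^sup>+\<^sup>1 b\<^sup>k\<close> become distinct monomials.\<close>

definition shift_a :: "zab \<Rightarrow> zab" where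
  "shift_a q = poly (map_poly (\<lambda>c. poly (map_poly of_int c) (va - vb)) q) vb"

lemma ring_hom_shift_a: "ring_hom shift_a"
  unfolding shift_a_def
  by (intro ring_hom_poly_map_poly ring_hom_of_int)

interpretation shift_a: ring_hom shift_a
  by (rule ring_hom_shift_a)

lemma shift_a_xab: "shift_a xab = va"
  by (simp add: shift_a_def xab_def va_def vb_def map_poly_pCons)

lemma shift_a_vb: "shift_a vb = vb"
  by (simp add: shift_a_def vb_def map_poly_pCons)

lemma shift_a_phi_hook_monomial:
  "shift_a (phi (lvar 0 ^ j * lvar k)) = monom (monom 1 (Suc j)) k"
  by (simp add: phi.mult phi.power shift_a.mult shift_a.power phi_lvar shift_a_xab shift_a_vb
      monom_monom_eq)

lemma shift_a_phi_one: "shift_a (phi 1) = monom (monom 1 0) 0"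
  by (simp only: phi.one shift_a.one) simp

lemma inj_on_span_hook_monomials: "inj_on (shift_a \<circ> phi) (zmod.span hook_monomials)"
proof -
  interpret h: ring_hom "shift_a \<circ> phi"
    by (intro ring_hom_comp ring_hom_shift_a phi.ring_hom_axioms)
  have image: "(shift_a \<circ> phi) ` hook_monomials \<subseteq> range (\<lambda>(i, j). monom (monom (1::int) i) j)"
  proof
    fix y
    assume "y \<in> (shift_a \<circ> phi) ` hook_monomials"
    then obtain i j where "y = monom (monom 1 i) j"
      unfolding hook_monomials_def
      by (auto simp only: shift_a_phi_hook_monomial shift_a_phi_one image_iff comp_apply
          mem_Collect_eq insert_iff)
    then show "y \<in> range (\<lambda>(i, j). monom (monom (1::int) i) j)"
      using rangeI[of "\<lambda>(i, j). monom (monom (1::int) i) j" "(i, j)"] by simp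
  qed
  have "inj_on (shift_a \<circ> phi) hook_monomials"
    by (auto simp: inj_on_def hook_monomials_def shift_a_phi_hook_monomial shift_a_phi_one
        monom_eq_iff' monom_eq_1_iff)
  moreover have "zmod.independent ((shift_a \<circ> phi) ` hook_monomials)"
    using zmod.independent_mono[OF zmod_independent_monomials image] .
  ultimately show ?thesis
    using h.zhom.inj_on_span_iff_independent_image by blast
qed

section \<open>Kernel and image of \<open>\<phi>\<close>\<close>

lemma I22_subset_kernel_phi: "I22 \<subseteq> {p. phi p = 0}"
  unfolding I22_eq_span
proof (rule zmod.span_minimal)
  show "schurs22 \<subseteq> {p. phi p = 0}"
    by (auto simp: schurs22_def phi_schur_eq_0)
qed (rule phi.zhom.subspace_kernel)

lemma kernel_phi_subset_I22:
  assumes "phi p = 0"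
  shows "p \<in> I22"
proof -
  obtain y z where y: "y \<in> zmod.span schurs22" and z: "z \<in> zmod.span hook_monomials"
    and p: "p = y + z"
    using symfun_mem_span[of p] unfolding zmod.span_Un by blast
  have "phi y = 0"
    using y I22_subset_kernel_phi by (auto simp: I22_eq_span)
  then have "(shift_a \<circ> phi) z = (shift_a \<circ> phi) 0"
    using assms p by (simp add: phi.add phi.zero shift_a.zero)
  then have "z = 0"
    using inj_onD[OF inj_on_span_hook_monomials _ z zmod.span_zero] by blast
  then show ?thesis
    using y p by (simp add: I22_eq_span)
qed

lemma phi_monomial: "phi (frag_of m) = (\<Prod>i\<in>Poly_Mapping.keys m. (xab * vb ^ i) ^ Poly_Mapping.lookup m i)"
  by (simp add: phi_def eval_sym_single eval_monomial_def lam_Suc_xab del: lam.simps)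

lemma phi_mem_constant_plus_multiple_xab: "phi p \<in> {of_int c + xab * q | c q. True}"
proof (induction p rule: frag_induction[OF subset_UNIV])
  case 1
  then show ?case
    by (auto simp: phi.zero intro: exI[of _ 0])
next
  case (2 m)
  show ?case
  proof (cases "m = 0")
    case True
    then have "phi (frag_of m) = of_int 1 + xab * 0"
      by (simp add: phi.one)
    then show ?thesis
      by blast
  next
    case False
    then obtain i where i: "i \<in> Poly_Mapping.keys m"
      by (metis all_not_in_conv keys_eq_empty)
    then have "xab * vb ^ i dvd (xab * vb ^ i) ^ Poly_Mapping.lookup m i"
      by (simp add: dvd_power in_keys_iff)
    then have "xab dvd (xab * vb ^ i) ^ Poly_Mapping.lookup m i"
      by (rule dvd_mult_left)
    moreover have "(xab * vb ^ i) ^ Poly_Mapping.lookup m i dvd phi (frag_of m)"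
      unfolding phi_monomial using i by (intro dvd_prodI) simp_all
    ultimately have "xab dvd phi (frag_of m)"
      by (rule dvd_trans)
    then obtain q where "phi (frag_of m) = of_int 0 + xab * q"
      by (auto elim: dvdE)
    then show ?thesis
      by blast
  qed
next
  case (3 a b)
  then obtain c q c' q' where "phi a = of_int c + xab * q" "phi b = of_int c' + xab * q'"
    by blast
  then have "phi (a - b) = of_int (c - c') + xab * (q - q')"
    by (simp add: phi.diff algebra_simps)
  then show ?case
    by blast
qed

lemma xab_mult_monomial_mem_range_phi: "xab * va ^ i * vb ^ j \<in> range phi"
proof (induction i arbitrary: j)
  case 0
  then show ?case
    using phi_lvar[of j] by (metis mult.right_neutral power_0 rangeI)
next
  case (Suc i)
  have eq: "xab * va ^ Suc i * vb ^ j = (xab * va ^ i * vb ^ j) * xab - xab * va ^ i * vb ^ Suc j"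
    by (simp add: xab_def algebra_simps)
  have "xab \<in> range phi"
    using phi_lvar[of 0] by (metis mult.right_neutral power_0 rangeI)
  then have "(xab * va ^ i * vb ^ j) * xab \<in> range phi"
    by (rule phi.range_mult[OF Suc.IH])
  then show ?case
    unfolding eq by (rule zmod.subspace_diff[OF phi.subspace_range _ Suc.IH])
qed

lemma xab_mult_mem_range_phi: "xab * q \<in> range phi"
proof -
  have "(\<Sum>j\<le>degree q. \<Sum>i\<le>degree (coeff q j). monom (monom (coeff (coeff q j) i) i) j) = q"
    by (simp add: poly_as_sum_of_monoms flip: monom_sum)
  then have "xab * q = xab * (\<Sum>j\<le>degree q. \<Sum>i\<le>degree (coeff q j).
      monom (monom (coeff (coeff q j) i) i) j)"
    by simp
  also have "\<dots> = (\<Sum>j\<le>degree q. \<Sum>i\<le>degree (coeff q j).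
      of_int (coeff (coeff q j) i) * (xab * va ^ i * vb ^ j))"
    by (simp add: monom_monom_eq sum_distrib_left mult_ac)
  also have "\<dots> \<in> range phi"
    using phi.subspace_range xab_mult_monomial_mem_range_phi
    by (intro zmod.subspace_sum zmod.subspace_scale)
  finally show ?thesis .
qed

lemma range_phi: "range phi = {of_int c + xab * q | c q. True}"
proof
  show "range phi \<subseteq> {of_int c + xab * q | c q. True}"
    using phi_mem_constant_plus_multiple_xab by blast
  show "{of_int c + xab * q | c q. True} \<subseteq> range phi"
  proof safe
    fix c :: int and q
    have "of_int c \<in> range phi"
      using phi.of_int[of c] by (metis rangeI)
    then show "of_int c + xab * q \<in> range phi"
      using xab_mult_mem_range_phi phi.subspace_range by (intro zmod.subspace_add)
  qed
qed

theorem corollary4: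
  shows "{p. phi p = 0} = I22
         \<and> range phi = {of_int c + xab * q | c q. True}
         \<and> (\<forall>n. lam (Suc n) xab = xab * vb ^ n)"
proof (intro conjI allI)
  show "{p. phi p = 0} = I22"
    using I22_subset_kernel_phi kernel_phi_subset_I22 by blast
qed (simp_all only: range_phi lam_Suc_xab)

end
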